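(* Let $M$ be a universal semi-POVM. Then $M$ is not computable, and $M$ is not a POVM on $\Sigma^*$, i.e. $\sum_{s\in\Sigma^*}M(s)\neq I$.
   Context: $N$ is a fixed positive integer; $\Sigma^*$ is the set of finite binary strings. $\mathrm{Her}(N)$ is the set of $N\times N$ Hermitian matrices and $\mathrm{Her}_Q(N)$ those with entries in $\mathbb{C}_Q=\{a+ib:a,b\in\mathbb{Q}\}$; $A\leqslant B$ means $B-A$ is positive semi-definite. A semi-POVM on $\Sigma^*$ is a map $R:\Sigma^*\to\mathrm{Her}(N)$ with $0\leqslant R(s)$ for all $s$ and $\sum_s R(s)\leqslant I$; it is a POVM on $\Sigma^*$ if $\sum_s R(s)=I$. A map $F:\Sigma^*\to M_N(\mathbb{C})$ is computable if there is a total recursive $G:\Sigma^*\times\mathbb{N}\to M_N(\mathbb{C}_Q)$ with $\|F(s)-G(s,k)\|<2^{-k}$ for all $s,k$. A lower-computable semi-POVM is a semi-POVM $R$ for which there is a total recursive $f:\mathbb{N}\times\Sigma^*\to\mathrm{Her}_Q(N)$ with $\lim_{n}f(n,s)=R(s)$ and $f(n,s)\leqslant R(s)$ for all $n,s$. A universal semi-POVM is a lower-computable semi-POVM $M$ such that for every lower-computable semi-POVM $R$ there is $c>0$ with $c\,R(s)\leqslant M(s)$ for all $s\in\Sigma^*$. *)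

theory Defs
  imports "HOL-Analysis.Analysis"
begin

text \<open>total_rec n f: f is a total recursive function of n natural-number arguments,
  given as a function on argument lists (only lists of length n matter).\<close>

inductive total_rec :: "nat \<Rightarrow> (nat list \<Rightarrow> nat) \<Rightarrow> bool" where
  zero: "total_rec n (\<lambda>_. 0)"
| succ: "total_rec 1 (\<lambda>xs. Suc (hd xs))"
| proj: "i < n \<Longrightarrow> total_rec n (\<lambda>xs. xs ! i)"
| compose: "total_rec m f \<Longrightarrow> length gs = m \<Longrightarrow> (\<forall>g\<in>set gs. total_rec n g)
          \<Longrightarrow> total_rec n (\<lambda>xs. f (map (\<lambda>g. g xs) gs))"
| prim_rec: "total_rec n g \<Longrightarrow> total_rec (Suc (Suc n)) h
          \<Longrightarrow> total_rec (Suc n) (\<lambda>xs. rec_nat (g (tl xs)) (\<lambda>k r. h (k # r # tl xs)) (hd xs))"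
| minimise: "total_rec (Suc n) g \<Longrightarrow> (\<forall>ys. length ys = n \<longrightarrow> (\<exists>y. g (y # ys) = 0))
          \<Longrightarrow> total_rec n (\<lambda>ys. LEAST y. g (y # ys) = 0)"

text \<open>Standard bijective coding of binary strings as naturals: s \<mapsto> (value of binary word 1s) - 1.\<close>
definition str_code :: "bool list \<Rightarrow> nat" where
  "str_code s = foldl (\<lambda>a b. 2 * a + (if b then 1 else 0)) 1 s - 1"

definition rec_rat_fn :: "(nat \<Rightarrow> nat \<Rightarrow> rat) \<Rightarrow> bool" where
  "rec_rat_fn q \<longleftrightarrow> (\<exists>a b c. total_rec 2 a \<and> total_rec 2 b \<and> total_rec 2 c \<and>
     (\<forall>x y. q x y = (of_nat (a [x, y]) - of_nat (b [x, y])) / of_nat (c [x, y] + 1)))"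

definition total_rec_QC_mat :: "(bool list \<Rightarrow> nat \<Rightarrow> complex^'n^'n) \<Rightarrow> bool" where
  "total_rec_QC_mat G \<longleftrightarrow> (\<forall>i j. \<exists>re im.
     rec_rat_fn re \<and> rec_rat_fn im \<and>
     (\<forall>s k. G s k $ i $ j = Complex (of_rat (re (str_code s) k)) (of_rat (im (str_code s) k))))"

definition total_rec_QC_mat' :: "(nat \<Rightarrow> bool list \<Rightarrow> complex^'n^'n) \<Rightarrow> bool" where
  "total_rec_QC_mat' f \<longleftrightarrow> (\<forall>i j. \<exists>re im.
     rec_rat_fn re \<and> rec_rat_fn im \<and>
     (\<forall>n s. f n s $ i $ j = Complex (of_rat (re n (str_code s))) (of_rat (im n (str_code s)))))"

definition hermitian :: "complex^'n^'n \<Rightarrow> bool" where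
  "hermitian A \<longleftrightarrow> (\<forall>i j. A $ i $ j = cnj (A $ j $ i))"

definition psd :: "complex^'n^'n \<Rightarrow> bool" where
  "psd A \<longleftrightarrow> hermitian A \<and>
     (\<forall>x::complex^'n. 0 \<le> Re (\<Sum>i\<in>UNIV. cnj (x $ i) * (A *v x) $ i))"

definition loewner_le :: "complex^'n^'n \<Rightarrow> complex^'n^'n \<Rightarrow> bool" (infix "\<preceq>\<^sub>L" 50) where
  "A \<preceq>\<^sub>L B \<longleftrightarrow> psd (B - A)"

definition her_Q :: "complex^'n^'n \<Rightarrow> bool" where
  "her_Q A \<longleftrightarrow> hermitian A \<and> (\<forall>i j. Re (A $ i $ j) \<in> \<rat> \<and> Im (A $ i $ j) \<in> \<rat>)"

definition semi_povm :: "(bool list \<Rightarrow> complex^'n^'n) \<Rightarrow> bool" where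
  "semi_povm R \<longleftrightarrow> (\<forall>s. hermitian (R s) \<and> 0 \<preceq>\<^sub>L R s) \<and>
     (\<exists>S. (R has_sum S) UNIV \<and> S \<preceq>\<^sub>L mat 1)"

definition povm :: "(bool list \<Rightarrow> complex^'n^'n) \<Rightarrow> bool" where
  "povm R \<longleftrightarrow> (\<forall>s. hermitian (R s) \<and> 0 \<preceq>\<^sub>L R s) \<and> (R has_sum mat 1) UNIV"

definition computable_mat_fn :: "(bool list \<Rightarrow> complex^'n^'n) \<Rightarrow> bool" where
  "computable_mat_fn F \<longleftrightarrow> (\<exists>G. total_rec_QC_mat G \<and>
     (\<forall>s k. norm (F s - G s k) < (1/2) ^ k))"

definition lower_computable_semi_povm :: "(bool list \<Rightarrow> complex^'n^'n) \<Rightarrow> bool" where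
  "lower_computable_semi_povm R \<longleftrightarrow> semi_povm R \<and>
     (\<exists>f. total_rec_QC_mat' f \<and> (\<forall>n s. her_Q (f n s)) \<and>
        (\<forall>s. (\<lambda>n. f n s) \<longlonglongrightarrow> R s) \<and> (\<forall>n s. f n s \<preceq>\<^sub>L R s))"

definition universal_semi_povm :: "(bool list \<Rightarrow> complex^'n^'n) \<Rightarrow> bool" where
  "universal_semi_povm M \<longleftrightarrow> lower_computable_semi_povm M \<and>
     (\<forall>R. lower_computable_semi_povm R \<longrightarrow> (\<exists>c::real. c > 0 \<and> (\<forall>s. c *\<^sub>R R s \<preceq>\<^sub>L M s)))"

end

theory Submission
  imports Defs
begin

(* Fix a diagonal index i and let rho y be the (i,i) entry of M at the y-th binary string.
   If rho (sigma k) <= C 4^-k along a recursive strictly increasing sequence sigma, then the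
   matrices 2^-(k+1) E_ii placed at the strings sigma k form a lower-computable semi-POVM, and
   universality gives c 2^-(k+1) <= C 4^-k for all k, which is absurd.  Both hypotheses yield
   such a sequence by effective search.  If M is computable, rho is a computable summable
   sequence, so its rational approximations find arbitrarily late y with rho y <= 3 4^-k.
   If M is a POVM, rho sums to 1, and its lower approximations eventually certify
   rho 0 + ... + rho z > 1 - 4^-k, after which every rho y is below 4^-k. *)

section \<open>Recursive functions of argument lists\<close>

definition recursive_fn :: "nat \<Rightarrow> (nat list \<Rightarrow> nat) \<Rightarrow> bool" where
  "recursive_fn n f \<longleftrightarrow> (\<exists>g. total_rec n g \<and> (\<forall>xs. length xs = n \<longrightarrow> g xs = f xs))"

lemma recursive_fn_cong:
  "recursive_fn n f \<Longrightarrow> (\<And>xs. length xs = n \<Longrightarrow> f xs = f' xs) \<Longrightarrow> recursive_fn n f'"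
  unfolding recursive_fn_def by metis

lemma total_rec_imp_recursive_fn: "total_rec n f \<Longrightarrow> recursive_fn n f"
  unfolding recursive_fn_def by blast

lemma recursive_fn_proj: "i < n \<Longrightarrow> recursive_fn n (\<lambda>xs. xs ! i)"
  by (rule total_rec_imp_recursive_fn) (rule total_rec.proj)

lemma recursive_fn_compose:
  assumes "recursive_fn m f" "length gs = m" "\<forall>g\<in>set gs. recursive_fn n g"
  shows "recursive_fn n (\<lambda>xs. f (map (\<lambda>g. g xs) gs))"
proof -
  obtain f' where f': "total_rec m f'" "\<And>xs. length xs = m \<Longrightarrow> f' xs = f xs"
    using assms(1) unfolding recursive_fn_def by blast
  obtain W where W: "\<And>g. g \<in> set gs \<Longrightarrow> total_rec n (W g) \<and> (\<forall>xs. length xs = n \<longrightarrow> W g xs = g xs)"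
    using assms(3) unfolding recursive_fn_def by metis
  have "total_rec n (\<lambda>xs. f' (map (\<lambda>g. g xs) (map W gs)))"
    by (rule total_rec.compose[OF f'(1)]) (use assms(2) W in auto)
  moreover have "f' (map (\<lambda>g. g xs) (map W gs)) = f (map (\<lambda>g. g xs) gs)" if "length xs = n" for xs
  proof -
    have args: "map (\<lambda>g. g xs) (map W gs) = map (\<lambda>g. g xs) gs"
      unfolding map_map o_def using W that by (intro map_cong) auto
    show ?thesis unfolding args using f'(2)[of "map (\<lambda>g. g xs) gs"] assms(2) by simp
  qed
  ultimately show ?thesis unfolding recursive_fn_def by blast
qed

lemma recursive_fn_select:
  assumes "recursive_fn (length is) f" "\<forall>i\<in>set is. i < n"
  shows "recursive_fn n (\<lambda>xs. f (map ((!) xs) is))"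
  using recursive_fn_compose[OF assms(1), of "map (\<lambda>i xs. xs ! i) is" n] assms(2)
  by (auto simp: recursive_fn_proj comp_def)

lemma recursive_fn_shift:
  assumes "recursive_fn n f"
  shows "recursive_fn (Suc n) (\<lambda>xs. f (tl xs))"
proof -
  have "recursive_fn (Suc n) (\<lambda>xs. f (map ((!) xs) [1..<Suc n]))"
    using recursive_fn_select[of "[1..<Suc n]" f "Suc n"] assms
    by (simp del: upt_Suc)
  then show ?thesis
    by (rule recursive_fn_cong) (auto intro!: arg_cong[where f=f] nth_equalityI simp: nth_tl simp del: upt_Suc)
qed

lemma recursive_fn_comp1:
  "recursive_fn 1 (\<lambda>xs. F (xs!0)) \<Longrightarrow> recursive_fn n a \<Longrightarrow> recursive_fn n (\<lambda>xs. F (a xs))"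
  using recursive_fn_compose[of 1 "\<lambda>xs. F (xs!0)" "[a]" n] by simp

lemma recursive_fn_comp2:
  "recursive_fn 2 (\<lambda>xs. F (xs!0) (xs!1)) \<Longrightarrow> recursive_fn n a \<Longrightarrow> recursive_fn n b \<Longrightarrow>
   recursive_fn n (\<lambda>xs. F (a xs) (b xs))"
  using recursive_fn_compose[of 2 "\<lambda>xs. F (xs!0) (xs!1)" "[a, b]" n] by simp

lemma recursive_fn_comp3:
  "recursive_fn 3 (\<lambda>xs. F (xs!0) (xs!1) (xs!2)) \<Longrightarrow> recursive_fn n a \<Longrightarrow> recursive_fn n b \<Longrightarrow>
   recursive_fn n c \<Longrightarrow> recursive_fn n (\<lambda>xs. F (a xs) (b xs) (c xs))"
  using recursive_fn_compose[of 3 "\<lambda>xs. F (xs!0) (xs!1) (xs!2)" "[a, b, c]" n]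
  by (simp add: numeral_3_eq_3)

lemma total_rec2_comp:
  "total_rec 2 f \<Longrightarrow> recursive_fn n a \<Longrightarrow> recursive_fn n b \<Longrightarrow> recursive_fn n (\<lambda>xs. f [a xs, b xs])"
  using recursive_fn_compose[of 2 f "[a, b]" n] by (simp add: total_rec_imp_recursive_fn)

lemma recursive_fn_Suc: "recursive_fn n a \<Longrightarrow> recursive_fn n (\<lambda>xs. Suc (a xs))"
proof -
  have "recursive_fn 1 (\<lambda>xs. Suc (xs!0))"
    using total_rec_imp_recursive_fn[OF total_rec.succ]
    by (rule recursive_fn_cong) (auto simp: length_Suc_conv)
  then show "recursive_fn n a \<Longrightarrow> recursive_fn n (\<lambda>xs. Suc (a xs))"
    by (rule recursive_fn_comp1)
qed

lemma recursive_fn_const: "recursive_fn n (\<lambda>_. k)"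
proof (induction k)
  case 0
  show ?case by (rule total_rec_imp_recursive_fn) (rule total_rec.zero)
next
  case (Suc k)
  show ?case using recursive_fn_Suc[OF Suc] .
qed

lemma recursive_fn_prim_rec:
  assumes g: "recursive_fn n g"
    and h: "recursive_fn (Suc (Suc n)) (\<lambda>zs. h (zs!0) (zs!1) (drop 2 zs))"
    and F_0: "\<And>ys. F 0 ys = g ys"
    and F_Suc: "\<And>x ys. F (Suc x) ys = h x (F x ys) ys"
  shows "recursive_fn (Suc n) (\<lambda>xs. F (xs!0) (tl xs))"
proof -
  obtain g' where g': "total_rec n g'" "\<And>xs. length xs = n \<Longrightarrow> g' xs = g xs"
    using g unfolding recursive_fn_def by blast
  obtain h' where h': "total_rec (Suc (Suc n)) h'"
    "\<And>zs. length zs = Suc (Suc n) \<Longrightarrow> h' zs = h (zs!0) (zs!1) (drop 2 zs)"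
    using h unfolding recursive_fn_def by blast
  have "rec_nat (g' (tl xs)) (\<lambda>k r. h' (k # r # tl xs)) (hd xs) = F (xs!0) (tl xs)"
    if "length xs = Suc n" for xs
  proof -
    have "rec_nat (g' (tl xs)) (\<lambda>k r. h' (k # r # tl xs)) m = F m (tl xs)" for m
      by (induction m) (use that g' h' F_0 F_Suc in auto)
    then show ?thesis using that by (cases xs) simp_all
  qed
  with total_rec.prim_rec[OF g'(1) h'(1)] show ?thesis
    unfolding recursive_fn_def by blast
qed

lemma recursive_fn_prim_rec1:
  assumes "recursive_fn 2 (\<lambda>zs. h (zs!0) (zs!1))" "F 0 = c" "\<And>x. F (Suc x) = h x (F x)"
  shows "recursive_fn 1 (\<lambda>xs. F (xs!0))"
  using recursive_fn_prim_rec[of 0 "\<lambda>_. c" "\<lambda>x r _. h x r" "\<lambda>x _. F x"] assms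
  by (simp add: recursive_fn_const numeral_2_eq_2)

lemma recursive_fn_prim_rec2:
  assumes "recursive_fn 1 (\<lambda>zs. g (zs!0))" "recursive_fn 3 (\<lambda>zs. h (zs!0) (zs!1) (zs!2))"
    "\<And>y. F 0 y = g y" "\<And>x y. F (Suc x) y = h x (F x y) y"
  shows "recursive_fn 2 (\<lambda>xs. F (xs!0) (xs!1))"
proof -
  have "recursive_fn (Suc 1) (\<lambda>xs. F (xs!0) (tl xs ! 0))"
  proof (rule recursive_fn_prim_rec[where h="\<lambda>x r ys. h x r (ys!0)"])
    show "recursive_fn (Suc (Suc 1)) (\<lambda>zs. h (zs!0) (zs!1) (drop 2 zs ! 0))"
      using assms(2) unfolding numeral_3_eq_3 One_nat_def
      by (rule recursive_fn_cong) simp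
  qed (use assms in auto)
  then show ?thesis unfolding Suc_1
    by (rule recursive_fn_cong) (auto simp: nth_tl)
qed

lemma recursive_fn_add: "recursive_fn n a \<Longrightarrow> recursive_fn n b \<Longrightarrow> recursive_fn n (\<lambda>xs. a xs + b xs)"
proof -
  have "recursive_fn 2 (\<lambda>xs. xs!0 + xs!1)"
    by (rule recursive_fn_prim_rec2[where g="\<lambda>y. y" and h="\<lambda>x r y. Suc r"])
       (auto intro!: recursive_fn_proj recursive_fn_Suc)
  then show "recursive_fn n a \<Longrightarrow> recursive_fn n b \<Longrightarrow> recursive_fn n (\<lambda>xs. a xs + b xs)"
    by (rule recursive_fn_comp2)
qed

lemma recursive_fn_mult: "recursive_fn n a \<Longrightarrow> recursive_fn n b \<Longrightarrow> recursive_fn n (\<lambda>xs. a xs * b xs)"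
proof -
  have "recursive_fn 2 (\<lambda>xs. xs!0 * xs!1)"
    by (rule recursive_fn_prim_rec2[where g="\<lambda>_. 0" and h="\<lambda>x r y. y + r"])
       (auto intro!: recursive_fn_proj recursive_fn_add recursive_fn_const)
  then show "recursive_fn n a \<Longrightarrow> recursive_fn n b \<Longrightarrow> recursive_fn n (\<lambda>xs. a xs * b xs)"
    by (rule recursive_fn_comp2)
qed

lemma recursive_fn_pow: "recursive_fn n a \<Longrightarrow> recursive_fn n b \<Longrightarrow> recursive_fn n (\<lambda>xs. a xs ^ b xs)"
proof -
  have "recursive_fn 2 (\<lambda>xs. xs!1 ^ xs!0)"
    by (rule recursive_fn_prim_rec2[where g="\<lambda>_. 1" and h="\<lambda>x r y. y * r"])
       (auto intro!: recursive_fn_proj recursive_fn_mult recursive_fn_const)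
  then show "recursive_fn n a \<Longrightarrow> recursive_fn n b \<Longrightarrow> recursive_fn n (\<lambda>xs. a xs ^ b xs)"
    using recursive_fn_comp2[of "\<lambda>x y. y ^ x" n b a] by simp
qed

lemma recursive_fn_diff: "recursive_fn n a \<Longrightarrow> recursive_fn n b \<Longrightarrow> recursive_fn n (\<lambda>xs. a xs - b xs)"
proof -
  have pred: "recursive_fn 1 (\<lambda>xs. xs!0 - 1)"
    by (rule recursive_fn_prim_rec1[where h="\<lambda>x r. x"]) (auto intro: recursive_fn_proj)
  have "recursive_fn 2 (\<lambda>xs. xs!1 - xs!0)"
  proof (rule recursive_fn_prim_rec2[where g="\<lambda>y. y" and h="\<lambda>x r y. r - 1"])
    show "recursive_fn 3 (\<lambda>zs. zs!1 - 1)"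
      by (rule recursive_fn_comp1[OF pred]) (simp add: recursive_fn_proj)
  qed (auto intro!: recursive_fn_proj)
  then show "recursive_fn n a \<Longrightarrow> recursive_fn n b \<Longrightarrow> recursive_fn n (\<lambda>xs. a xs - b xs)"
    using recursive_fn_comp2[of "\<lambda>x y. y - x" n b a] by simp
qed

(* 0 encodes truth, as in the minimisation scheme of total_rec. *)
definition recursive_pred :: "nat \<Rightarrow> (nat list \<Rightarrow> bool) \<Rightarrow> bool" where
  "recursive_pred n P \<longleftrightarrow> recursive_fn n (\<lambda>xs. if P xs then 0 else 1)"

lemma recursive_pred_comp2:
  "recursive_pred 2 (\<lambda>xs. T (xs!0) (xs!1)) \<Longrightarrow> recursive_fn n a \<Longrightarrow> recursive_fn n b \<Longrightarrow>
   recursive_pred n (\<lambda>xs. T (a xs) (b xs))"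
  unfolding recursive_pred_def by (rule recursive_fn_comp2)

lemma recursive_pred_less:
  assumes "recursive_fn n a" "recursive_fn n b"
  shows "recursive_pred n (\<lambda>xs. a xs < b xs)"
proof -
  have "recursive_fn n (\<lambda>xs. 1 - (b xs - a xs))"
    by (intro recursive_fn_diff recursive_fn_const assms)
  then show ?thesis unfolding recursive_pred_def by (rule recursive_fn_cong) auto
qed

lemma recursive_pred_not:
  assumes "recursive_pred n P"
  shows "recursive_pred n (\<lambda>xs. \<not> P xs)"
proof -
  have "recursive_fn n (\<lambda>xs. 1 - (if P xs then 0 else 1))"
    using assms unfolding recursive_pred_def by (intro recursive_fn_diff recursive_fn_const)
  then show ?thesis unfolding recursive_pred_def by (rule recursive_fn_cong) simp
qed

lemma recursive_pred_conj:
  assumes "recursive_pred n P" "recursive_pred n Q"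
  shows "recursive_pred n (\<lambda>xs. P xs \<and> Q xs)"
proof -
  have "recursive_fn n (\<lambda>xs. 1 - (1 - ((if P xs then 0 else 1) + (if Q xs then 0 else 1))))"
    using assms unfolding recursive_pred_def by (intro recursive_fn_diff recursive_fn_add recursive_fn_const)
  then show ?thesis unfolding recursive_pred_def by (rule recursive_fn_cong) auto
qed

lemma recursive_pred_le:
  "recursive_fn n a \<Longrightarrow> recursive_fn n b \<Longrightarrow> recursive_pred n (\<lambda>xs. a xs \<le> b xs)"
  using recursive_pred_not[OF recursive_pred_less[of n b a]] by (simp add: not_less)

lemma recursive_pred_eq:
  "recursive_fn n a \<Longrightarrow> recursive_fn n b \<Longrightarrow> recursive_pred n (\<lambda>xs. a xs = b xs)"
  using recursive_pred_conj[OF recursive_pred_le[of n a b] recursive_pred_le[of n b a]]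
  by (simp add: order_eq_iff)

lemma recursive_fn_if:
  assumes "recursive_pred n P" "recursive_fn n a" "recursive_fn n b"
  shows "recursive_fn n (\<lambda>xs. if P xs then a xs else b xs)"
proof -
  have "recursive_fn n (\<lambda>xs. a xs * (1 - (if P xs then 0 else 1)) + b xs * (if P xs then 0 else 1))"
    using assms unfolding recursive_pred_def
    by (intro recursive_fn_add recursive_fn_mult recursive_fn_diff recursive_fn_const)
  then show ?thesis by (rule recursive_fn_cong) auto
qed

lemma recursive_fn_Least:
  assumes "recursive_pred (Suc n) (\<lambda>zs. P (zs!0) (tl zs))"
    and "\<And>ys. length ys = n \<Longrightarrow> \<exists>y. P y ys"
  shows "recursive_fn n (\<lambda>ys. LEAST y. P y ys)"
proof -
  obtain g where g: "total_rec (Suc n) g"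
    "\<And>zs. length zs = Suc n \<Longrightarrow> g zs = (if P (zs!0) (tl zs) then 0 else 1)"
    using assms(1) unfolding recursive_pred_def recursive_fn_def by blast
  have "\<forall>ys. length ys = n \<longrightarrow> (\<exists>y. g (y # ys) = 0)"
    using assms(2) g(2) by fastforce
  from total_rec.minimise[OF g(1) this] show ?thesis
    unfolding recursive_fn_def using g(2) by (intro exI[of _ "\<lambda>ys. LEAST y. g (y # ys) = 0"]) simp
qed

lemma recursive_fn_div:
  assumes "recursive_fn n a" "recursive_fn n b"
  shows "recursive_fn n (\<lambda>xs. a xs div Suc (b xs))"
proof -
  have "recursive_pred (Suc n) (\<lambda>zs. a (tl zs) < Suc (zs!0) * Suc (b (tl zs)))"
    by (intro recursive_pred_less recursive_fn_mult recursive_fn_Suc recursive_fn_proj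
        recursive_fn_shift assms) simp
  then have "recursive_fn n (\<lambda>xs. LEAST q. a xs < Suc q * Suc (b xs))"
  proof (rule recursive_fn_Least[where P="\<lambda>q ys. a ys < Suc q * Suc (b ys)"])
    show "\<exists>q. a ys < Suc q * Suc (b ys)" for ys
      by (rule exI[of _ "a ys"]) simp
  qed
  moreover have "(LEAST q. x < Suc q * Suc d) = x div Suc d" for x d :: nat
  proof (rule Least_equality)
    show "x < Suc (x div Suc d) * Suc d"
      using dividend_less_div_times[of "Suc d" x] by (simp add: algebra_simps)
    show "x div Suc d \<le> q" if "x < Suc q * Suc d" for q
      using less_mult_imp_div_less[OF that] by simp
  qed
  ultimately show ?thesis by simp
qed

lemma recursive_fn_bounded_sum:
  assumes "recursive_fn (Suc n) (\<lambda>zs. f (zs!0) (tl zs))"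
  shows "recursive_fn (Suc n) (\<lambda>xs. \<Sum>y<xs!0. f y (tl xs))"
proof (rule recursive_fn_prim_rec[where g="\<lambda>_. 0" and h="\<lambda>x r ys. r + f x ys"])
  have "recursive_fn (Suc (Suc n)) (\<lambda>zs. f (zs!0) (tl (map ((!) zs) (0 # [2..<Suc (Suc n)]))))"
    using recursive_fn_select[of "0 # [2..<Suc (Suc n)]" "\<lambda>zs. f (zs!0) (tl zs)"] assms
    by (simp del: upt_Suc)
  then have "recursive_fn (Suc (Suc n)) (\<lambda>zs. f (zs!0) (drop 2 zs))"
    by (rule recursive_fn_cong) (auto intro!: arg_cong[where f="f _"] nth_equalityI simp del: upt_Suc)
  then show "recursive_fn (Suc (Suc n)) (\<lambda>zs. zs!1 + f (zs!0) (drop 2 zs))"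
    by (intro recursive_fn_add recursive_fn_proj) simp_all
qed (simp_all add: recursive_fn_const)

lemma recursive_strict_mono_selection:
  assumes T: "recursive_pred 2 (\<lambda>xs. T (xs!0) (xs!1))" and unbounded: "\<And>k p. \<exists>y>p. T k y"
  obtains \<sigma> where "strict_mono \<sigma>" "recursive_fn 1 (\<lambda>xs. \<sigma> (xs!0))" "\<And>k. T k (\<sigma> k)"
proof -
  define H where "H k p = (LEAST y. p < y \<and> T k y)" for k p
  have H: "p < H k p \<and> T k (H k p)" for k p
    unfolding H_def using LeastI_ex[of "\<lambda>y. p < y \<and> T k y"] unbounded by blast
  have "recursive_pred (Suc 2) (\<lambda>zs. tl zs ! 1 < zs!0 \<and> T (tl zs ! 0) (zs!0))"
    by (intro recursive_pred_conj recursive_pred_less recursive_pred_comp2[OF T]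
        recursive_fn_shift recursive_fn_proj) simp_all
  then have "recursive_fn 2 (\<lambda>ys. H (ys!0) (ys!1))"
    unfolding H_def using unbounded by (intro recursive_fn_Least) auto
  then have H_Suc: "recursive_fn 2 (\<lambda>zs. H (Suc (zs!0)) (zs!1))"
    by (rule recursive_fn_comp2) (auto intro!: recursive_fn_Suc recursive_fn_proj)
  define \<sigma> where "\<sigma> k = rec_nat (H 0 0) (\<lambda>k r. H (Suc k) r) k" for k
  have \<sigma>_Suc: "\<sigma> (Suc k) = H (Suc k) (\<sigma> k)" for k
    by (simp add: \<sigma>_def)
  show ?thesis
  proof
    show "strict_mono \<sigma>"
      by (rule strict_monoI_Suc) (simp add: \<sigma>_Suc H)
    show "recursive_fn 1 (\<lambda>xs. \<sigma> (xs!0))"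
      by (rule recursive_fn_prim_rec1[OF H_Suc]) (simp_all add: \<sigma>_def)
    show "T k (\<sigma> k)" for k
      by (cases k) (simp_all add: \<sigma>_def H)
  qed
qed

section \<open>Binary strings as natural numbers\<close>

definition bin_val :: "bool list \<Rightarrow> nat" where
  "bin_val s = foldl (\<lambda>a b. 2 * a + (if b then 1 else 0)) 1 s"

lemma bin_val_snoc: "bin_val (s @ [b]) = 2 * bin_val s + (if b then 1 else 0)"
  by (simp add: bin_val_def)

lemma bin_val_pos: "1 \<le> bin_val s"
  by (induction s rule: rev_induct) (auto simp: bin_val_snoc bin_val_def[of "[]"])

function bin_digits :: "nat \<Rightarrow> bool list" where
  "bin_digits n = (if n \<le> 1 then [] else bin_digits (n div 2) @ [odd n])"
  by auto
termination by (relation "Wellfounded.measure id") auto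

declare bin_digits.simps[simp del]

lemma bin_digits_bin_val: "bin_digits (bin_val s) = s"
proof (induction s rule: rev_induct)
  case Nil
  then show ?case by (simp add: bin_val_def bin_digits.simps)
next
  case (snoc b s)
  then show ?case
    using bin_val_pos[of s] by (subst bin_digits.simps) (auto simp: bin_val_snoc)
qed

lemma bin_val_bin_digits: "1 \<le> n \<Longrightarrow> bin_val (bin_digits n) = n"
proof (induction n rule: bin_digits.induct)
  case (1 n)
  show ?case
  proof (cases "n \<le> 1")
    case True
    then show ?thesis using 1(2) by (simp add: bin_digits.simps bin_val_def)
  next
    case False
    then show ?thesis using 1 by (subst bin_digits.simps) (simp add: bin_val_snoc)
  qed
qed

definition str_decode :: "nat \<Rightarrow> bool list" where
  "str_decode y = bin_digits (Suc y)"

lemma str_code_eq_bin_val: "str_code s = bin_val s - 1"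
  by (simp add: str_code_def bin_val_def)

lemma str_code_decode [simp]: "str_code (str_decode y) = y"
  by (simp add: str_code_eq_bin_val str_decode_def bin_val_bin_digits)

lemma str_decode_code [simp]: "str_decode (str_code s) = s"
  using bin_val_pos[of s] by (simp add: str_code_eq_bin_val str_decode_def bin_digits_bin_val)

lemma bij_str_decode: "bij str_decode"
  by (rule bij_betwI[where g=str_code]) auto

lemma has_sum_str_decode_iff: "((\<lambda>y. f (str_decode y)) has_sum S) UNIV \<longleftrightarrow> (f has_sum S) UNIV"
  using has_sum_reindex_bij_betw[OF bij_str_decode, of f S] by simp

definition diag_mat :: "('n::finite \<Rightarrow> real) \<Rightarrow> complex^'n^'n" where
  "diag_mat d = (\<chi> i j. if i = j then complex_of_real (d i) else 0)"

lemma hermitian_diag_mat: "hermitian (diag_mat d)"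
  by (simp add: hermitian_def diag_mat_def)

lemma diag_mat_mult_vec: "(diag_mat d *v x) $ i = complex_of_real (d i) * x $ i"
  unfolding diag_mat_def matrix_vector_mult_def
  by (simp add: if_distrib[where f="\<lambda>a. a * _"] cong: if_cong)

lemma psd_diag_mat:
  fixes d :: "'n::finite \<Rightarrow> real"
  assumes "\<And>i. 0 \<le> d i"
  shows "psd (diag_mat d)"
  unfolding psd_def
proof (intro conjI allI hermitian_diag_mat)
  fix x :: "complex^'n"
  have "Re (cnj (x $ i) * (diag_mat d *v x) $ i) = d i * (cmod (x $ i))\<^sup>2" for i
    using cmod_power2[of "x $ i"] by (simp add: diag_mat_mult_vec power2_eq_square algebra_simps)
  then show "0 \<le> Re (\<Sum>i\<in>UNIV. cnj (x $ i) * (diag_mat d *v x) $ i)"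
    using assms by (simp add: Re_sum sum_nonneg)
qed

lemma scaleR_diag_mat: "c *\<^sub>R diag_mat d = diag_mat (\<lambda>i. c * d i)"
  by (auto simp: diag_mat_def vec_eq_iff complex_eq_iff)

lemma quadratic_form_axis:
  "(\<Sum>j\<in>UNIV. cnj (axis i 1 $ j) * ((A::complex^'n^'n) *v axis i 1) $ j) = A $ i $ i"
  by (simp add: axis_def matrix_vector_mult_def if_distrib[where f="\<lambda>a. _ * a"]
      if_distrib[where f="\<lambda>a. a * _"] if_distrib[where f=cnj] cong: if_cong)

lemma loewner_le_diag: "A \<preceq>\<^sub>L B \<Longrightarrow> Re (A $ i $ i) \<le> Re (B $ i $ i)"
  unfolding loewner_le_def psd_def
  by (drule conjunct2, drule spec[of _ "axis i 1"]) (simp add: quadratic_form_axis)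

lemma abs_Re_entry_le_norm: "\<bar>Re (A $ i $ j)\<bar> \<le> norm (A :: complex^'n^'n)"
proof -
  have "\<bar>Re (A $ i $ j)\<bar> \<le> norm (A $ i $ j)" by (rule abs_Re_le_cmod)
  also have "\<dots> \<le> norm (A $ i)" by (rule Finite_Cartesian_Product.norm_nth_le)
  also have "\<dots> \<le> norm A" by (rule Finite_Cartesian_Product.norm_nth_le)
  finally show ?thesis .
qed

lemma has_sum_diag_sums:
  fixes M :: "bool list \<Rightarrow> complex^'n^'n"
  assumes "(M has_sum S) UNIV"
  shows "(\<lambda>y. Re (M (str_decode y) $ i $ i)) sums Re (S $ i $ i)"
proof -
  have "bounded_linear (\<lambda>A::complex^'n^'n. Re (A $ i $ i))"
    by (intro bounded_linear_compose[OF bounded_linear_Re] bounded_linear_compose[OF bounded_linear_vec_nth]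
        bounded_linear_vec_nth)
  from has_sum_bounded_linear[OF this assms] show ?thesis
    by (intro has_sum_imp_sums) (simp add: has_sum_str_decode_iff[of "\<lambda>s. Re (M s $ i $ i)"])
qed

lemma rec_rat_fnI:
  assumes "recursive_fn 2 a" "recursive_fn 2 b" "recursive_fn 2 c"
    and "\<And>x y. q x y = (of_nat (a [x, y]) - of_nat (b [x, y])) / of_nat (c [x, y] + 1)"
  shows "rec_rat_fn q"
proof -
  obtain a' b' c' where "total_rec 2 a'" "total_rec 2 b'" "total_rec 2 c'"
    "\<And>xs. length xs = 2 \<Longrightarrow> a' xs = a xs \<and> b' xs = b xs \<and> c' xs = c xs"
    using assms(1-3) unfolding recursive_fn_def by metis
  then show ?thesis
    unfolding rec_rat_fn_def using assms(4) by (intro exI[of _ a'] exI[of _ b'] exI[of _ c']) simp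
qed

lemma rec_rat_fn_zero: "rec_rat_fn (\<lambda>_ _. 0)"
  by (rule rec_rat_fnI[of "\<lambda>_. 0" "\<lambda>_. 0" "\<lambda>_. 0"]) (simp_all add: recursive_fn_const)

definition nat_frac :: "nat \<Rightarrow> nat \<Rightarrow> nat \<Rightarrow> real" where
  "nat_frac a b c = (real a - real b) / (real c + 1)"

lemma rec_rat_fn_nat_frac:
  assumes "rec_rat_fn q"
  obtains a b c where "total_rec 2 a" "total_rec 2 b" "total_rec 2 c"
    "\<And>x y. of_rat (q x y) = nat_frac (a [x, y]) (b [x, y]) (c [x, y])"
proof -
  obtain a b c where "total_rec 2 a" "total_rec 2 b" "total_rec 2 c"
    "\<And>x y. q x y = (of_nat (a [x, y]) - of_nat (b [x, y])) / of_nat (c [x, y] + 1)"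
    using assms unfolding rec_rat_fn_def by blast
  moreover have "of_rat ((of_nat (a [x, y]) - of_nat (b [x, y])) / of_nat (c [x, y] + 1))
      = nat_frac (a [x, y]) (b [x, y]) (c [x, y])" for x y
    by (simp add: nat_frac_def of_rat_divide of_rat_diff of_rat_add add.commute)
  ultimately show ?thesis using that by simp
qed

lemma nat_frac_less_iff:
  assumes "0 < q"
  shows "nat_frac a b c < real d / real q \<longleftrightarrow> a * q < d * (c + 1) + b * q"
proof -
  have "nat_frac a b c < real d / real q \<longleftrightarrow> real a * real q < real d * (real c + 1) + real b * real q"
    using assms unfolding nat_frac_def by (simp add: field_simps)
  also have "\<dots> \<longleftrightarrow> real (a * q) < real (d * (c + 1) + b * q)"
    by (simp add: algebra_simps)
  also have "\<dots> \<longleftrightarrow> a * q < d * (c + 1) + b * q"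
    by (rule of_nat_less_iff)
  finally show ?thesis .
qed

lemma of_nat_diff_div_eq_max_nat_frac: "real (a - b) / (real c + 1) = max (nat_frac a b c) 0"
proof (cases "b \<le> a")
  case True
  then show ?thesis
    by (simp add: nat_frac_def of_nat_diff max_absorb1 divide_nonneg_pos)
next
  case False
  then show ?thesis
    by (simp add: nat_frac_def max_absorb2 divide_nonpos_pos)
qed

lemma dyadic_threshold_iff:
  "1 - (1/4) ^ k < real S / 2 ^ K \<longleftrightarrow> 4 ^ k * 2 ^ K < 4 ^ k * S + (2::nat) ^ K"
proof -
  have "1 - (1/4) ^ k < real S / 2 ^ K \<longleftrightarrow> real (4 ^ k * 2 ^ K) < real (4 ^ k * S + 2 ^ K)"
    by (simp add: power_one_over field_simps)
  also have "\<dots> \<longleftrightarrow> 4 ^ k * 2 ^ K < 4 ^ k * S + (2::nat) ^ K"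
    by (rule of_nat_less_iff)
  finally show ?thesis .
qed

lemma dyadic_floor_bounds:
  fixes x d K :: nat
  defines "t \<equiv> real x / (real d + 1)"
  shows "real (x * 2 ^ K div Suc d) / 2 ^ K \<le> t"
    and "t - 1 / 2 ^ K < real (x * 2 ^ K div Suc d) / 2 ^ K"
proof -
  have floor: "real (x * 2 ^ K div Suc d) = of_int \<lfloor>t * 2 ^ K\<rfloor>"
    using floor_divide_of_nat_eq[of "x * 2 ^ K" "Suc d", where 'a=real]
    by (simp add: t_def field_simps)
  show "real (x * 2 ^ K div Suc d) / 2 ^ K \<le> t"
    unfolding floor by (simp add: divide_le_eq)
  show "t - 1 / 2 ^ K < real (x * 2 ^ K div Suc d) / 2 ^ K"
  proof -
    have "(t - 1 / 2 ^ K) * 2 ^ K < of_int \<lfloor>t * 2 ^ K\<rfloor>"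
      using real_of_int_floor_gt_diff_one[of "t * 2 ^ K"] by (simp add: algebra_simps)
    then show ?thesis unfolding floor by (simp add: less_divide_eq)
  qed
qed

section \<open>Universality forbids fast decay along recursive sequences\<close>

definition range_index :: "(nat \<Rightarrow> nat) \<Rightarrow> nat \<Rightarrow> nat" where
  "range_index \<sigma> y = (LEAST k. y \<le> \<sigma> k)"

(* Recovering k from sigma k by minimisation, rather than by inverting sigma, keeps the weight
   recursive. *)
definition dyadic_weight :: "(nat \<Rightarrow> nat) \<Rightarrow> nat \<Rightarrow> real" where
  "dyadic_weight \<sigma> y = (if \<sigma> (range_index \<sigma> y) = y then (1/2) ^ Suc (range_index \<sigma> y) else 0)"

lemma range_index_at: "strict_mono \<sigma> \<Longrightarrow> range_index \<sigma> (\<sigma> k) = k"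
  unfolding range_index_def by (rule Least_equality) (auto simp: strict_mono_less_eq)

lemma dyadic_weight_at: "strict_mono \<sigma> \<Longrightarrow> dyadic_weight \<sigma> (\<sigma> k) = (1/2) ^ Suc k"
  by (simp add: dyadic_weight_def range_index_at)

lemma dyadic_weight_has_sum:
  assumes "strict_mono \<sigma>"
  shows "(dyadic_weight \<sigma> has_sum 1) UNIV"
proof -
  have "(\<lambda>k. (1/2::real) * (1/2) ^ k) sums (1/2 * (1 / (1 - 1/2)))"
    by (intro sums_mult geometric_sums) simp
  then have "((\<lambda>k. (1/2::real) ^ Suc k) has_sum 1) UNIV"
    by (intro sums_nonneg_imp_has_sum) simp_all
  then have "((\<lambda>k. dyadic_weight \<sigma> (\<sigma> k)) has_sum 1) UNIV"
    by (simp add: dyadic_weight_at[OF assms])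
  then have "(dyadic_weight \<sigma> has_sum 1) (range \<sigma>)"
    using has_sum_reindex[OF strict_mono_imp_inj_on[OF assms], where g="dyadic_weight \<sigma>" and x=1]
    by (simp add: o_def)
  moreover have "dyadic_weight \<sigma> y = 0" if "y \<notin> range \<sigma>" for y
    using that unfolding dyadic_weight_def by (metis rangeI)
  ultimately show ?thesis
    using has_sum_cong_neutral[of UNIV "range \<sigma>" "dyadic_weight \<sigma>" "dyadic_weight \<sigma>"] by auto
qed

lemma recursive_dyadic_weight:
  assumes "strict_mono \<sigma>" "recursive_fn 1 (\<lambda>xs. \<sigma> (xs!0))"
  obtains q where "rec_rat_fn q" "\<And>n y. of_rat (q n y) = dyadic_weight \<sigma> y"
proof -
  have "recursive_pred (Suc 1) (\<lambda>zs. tl zs ! 0 \<le> \<sigma> (zs!0))"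
    by (intro recursive_pred_le recursive_fn_shift recursive_fn_comp1[OF assms(2)] recursive_fn_proj) simp_all
  then have index: "recursive_fn 1 (\<lambda>xs. range_index \<sigma> (xs!0))"
    unfolding range_index_def using seq_suble[OF assms(1)] by (intro recursive_fn_Least) auto
  define num where "num y = (if \<sigma> (range_index \<sigma> y) = y then 1 else 0 :: nat)" for y
  define den where "den y = (2 ^ Suc (range_index \<sigma> y) - 1 :: nat)" for y
  have "rec_rat_fn (\<lambda>n y. (of_nat (num y) - of_nat 0) / of_nat (den y + 1))"
  proof (rule rec_rat_fnI[where b="\<lambda>_. 0"])
    show "recursive_fn 2 (\<lambda>xs. num (xs!1))" unfolding num_def
      by (intro recursive_fn_if recursive_pred_eq recursive_fn_comp1[OF assms(2)]
          recursive_fn_comp1[OF index] recursive_fn_proj recursive_fn_const) simp_all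
    show "recursive_fn 2 (\<lambda>xs. den (xs!1))" unfolding den_def
      by (intro recursive_fn_diff recursive_fn_pow recursive_fn_Suc recursive_fn_comp1[OF index]
          recursive_fn_proj recursive_fn_const) simp_all
  qed (simp_all add: recursive_fn_const)
  moreover have "of_rat ((of_nat (num y) - of_nat 0) / of_nat (den y + 1)) = dyadic_weight \<sigma> y" for y
  proof -
    have "den y + 1 = 2 ^ Suc (range_index \<sigma> y)"
      unfolding den_def by (simp add: Suc_leI)
    then show ?thesis
      unfolding num_def dyadic_weight_def
      by (simp add: of_rat_divide of_rat_power power_one_over del: power_Suc)
  qed
  ultimately show ?thesis using that by blast
qed

definition dyadic_semi_povm :: "(nat \<Rightarrow> nat) \<Rightarrow> 'n::finite \<Rightarrow> bool list \<Rightarrow> complex^'n^'n" where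
  "dyadic_semi_povm \<sigma> i s = diag_mat (\<lambda>j. if j = i then dyadic_weight \<sigma> (str_code s) else 0)"

lemma dyadic_semi_povm_entry:
  "dyadic_semi_povm \<sigma> i s $ j $ l =
     (if j = i \<and> l = i then complex_of_real (dyadic_weight \<sigma> (str_code s)) else 0)"
  by (auto simp: dyadic_semi_povm_def diag_mat_def)

lemma semi_povm_dyadic:
  fixes i :: "'n::finite"
  assumes "strict_mono \<sigma>"
  shows "semi_povm (dyadic_semi_povm \<sigma> i)"
proof -
  define E :: "complex^'n^'n" where "E = diag_mat (\<lambda>j. if j = i then 1 else 0)"
  have "dyadic_semi_povm \<sigma> i s = dyadic_weight \<sigma> (str_code s) *\<^sub>R E" for s
    unfolding dyadic_semi_povm_def E_def scaleR_diag_mat by (rule arg_cong[where f=diag_mat]) auto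
  moreover have "((\<lambda>y. dyadic_weight \<sigma> y *\<^sub>R E) has_sum E) UNIV"
    using has_sum_bounded_linear[OF bounded_linear_scaleR_left dyadic_weight_has_sum[OF assms]] by simp
  ultimately have "(dyadic_semi_povm \<sigma> i has_sum E) UNIV"
    using has_sum_str_decode_iff[of "dyadic_semi_povm \<sigma> i"] by simp
  moreover have "E \<preceq>\<^sub>L mat 1"
  proof -
    have "mat 1 - E = diag_mat (\<lambda>j. if j = i then 0 else 1)"
      by (simp add: E_def diag_mat_def mat_def vec_eq_iff)
    then show ?thesis unfolding loewner_le_def by (simp add: psd_diag_mat)
  qed
  moreover have "hermitian (dyadic_semi_povm \<sigma> i s) \<and> 0 \<preceq>\<^sub>L dyadic_semi_povm \<sigma> i s" for s
    unfolding loewner_le_def dyadic_semi_povm_def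
    by (simp add: hermitian_diag_mat psd_diag_mat dyadic_weight_def)
  ultimately show ?thesis unfolding semi_povm_def by blast
qed

lemma lower_computable_dyadic:
  fixes i :: "'n::finite"
  assumes "strict_mono \<sigma>" "recursive_fn 1 (\<lambda>xs. \<sigma> (xs!0))"
  shows "lower_computable_semi_povm (dyadic_semi_povm \<sigma> i)"
  unfolding lower_computable_semi_povm_def
proof (intro conjI semi_povm_dyadic[OF assms(1)] exI[of _ "\<lambda>_. dyadic_semi_povm \<sigma> i"] allI)
  obtain q where q: "rec_rat_fn q" "\<And>n y. of_rat (q n y) = dyadic_weight \<sigma> y"
    using recursive_dyadic_weight[OF assms] by blast
  show "total_rec_QC_mat' (\<lambda>_. dyadic_semi_povm \<sigma> i)"
    unfolding total_rec_QC_mat'_def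
  proof (intro allI)
    fix j l :: 'n
    show "\<exists>re im. rec_rat_fn re \<and> rec_rat_fn im \<and> (\<forall>n s. dyadic_semi_povm \<sigma> i s $ j $ l =
        Complex (of_rat (re n (str_code s))) (of_rat (im n (str_code s))))"
    proof (cases "j = i \<and> l = i")
      case True
      then show ?thesis using q rec_rat_fn_zero
        by (intro exI[of _ q] exI[of _ "\<lambda>_ _. 0"]) (simp add: dyadic_semi_povm_entry complex_of_real_def)
    next
      case False
      then show ?thesis using rec_rat_fn_zero
        by (intro exI[of _ "\<lambda>_ _. 0"] exI[of _ "\<lambda>_ _. 0"]) (auto simp: dyadic_semi_povm_entry complex_eq_iff)
    qed
  qed
  show "her_Q (dyadic_semi_povm \<sigma> i s)" for s
    unfolding her_Q_def using hermitian_diag_mat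
    by (auto simp: dyadic_semi_povm_def diag_mat_def dyadic_weight_def)
  show "dyadic_semi_povm \<sigma> i s \<preceq>\<^sub>L dyadic_semi_povm \<sigma> i s" for s
    by (simp add: loewner_le_def psd_def hermitian_def)
qed simp

lemma universal_semi_povm_diag_not_small:
  fixes M :: "bool list \<Rightarrow> complex^'n^'n"
  assumes "universal_semi_povm M" "strict_mono \<sigma>" "recursive_fn 1 (\<lambda>xs. \<sigma> (xs!0))"
    and small: "\<And>k. Re (M (str_decode (\<sigma> k)) $ i $ i) \<le> C * (1/4) ^ k"
  shows False
proof -
  obtain c :: real where c: "c > 0" "\<And>s. c *\<^sub>R dyadic_semi_povm \<sigma> i s \<preceq>\<^sub>L M s"
    using assms(1) lower_computable_dyadic[OF assms(2,3)] unfolding universal_semi_povm_def by blast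
  have lower: "c * (1/2) ^ Suc k \<le> Re (M (str_decode (\<sigma> k)) $ i $ i)" for k
    using loewner_le_diag[OF c(2)[of "str_decode (\<sigma> k)"], of i]
    by (simp add: dyadic_semi_povm_entry dyadic_weight_at[OF assms(2)])
  obtain k where k: "(1/2::real) ^ k < c / (2 * (\<bar>C\<bar> + 1))"
    using real_arch_pow_inv[of "c / (2 * (\<bar>C\<bar> + 1))" "1/2"] c(1) by auto
  define x :: real where "x = (1/2) ^ k"
  have "x > 0" by (simp add: x_def)
  have "C * (x * x) \<le> (\<bar>C\<bar> + 1) * (x * x)"
    using \<open>x > 0\<close> by (intro mult_right_mono) auto
  also have "\<dots> = ((\<bar>C\<bar> + 1) * x) * x" by simp
  also have "\<dots> < (c / 2) * x"
    using k \<open>x > 0\<close> unfolding x_def by (intro mult_strict_right_mono) (simp_all add: field_simps)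
  finally have "C * (1/4) ^ k < c * (1/2) ^ Suc k"
    by (simp add: x_def power_mult_distrib[symmetric])
  with lower[of k] small[of k] show False by linarith
qed

section \<open>Computable null sequences\<close>

lemma computable_null_seq_recursive_subseq:
  fixes \<rho> :: "nat \<Rightarrow> real"
  assumes abc: "total_rec 2 a" "total_rec 2 b" "total_rec 2 c"
    and approx: "\<And>y k. \<bar>\<rho> y - nat_frac (a [y, k]) (b [y, k]) (c [y, k])\<bar> < (1/2) ^ k"
    and null: "\<rho> \<longlonglongrightarrow> 0"
  obtains \<sigma> where "strict_mono \<sigma>" "recursive_fn 1 (\<lambda>xs. \<sigma> (xs!0))" "\<And>k. \<rho> (\<sigma> k) \<le> 3 * (1/4) ^ k"
proof -
  (* T k y: the 2k-th approximation of rho y is below 2 * 4^-k, cleared of denominators *)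
  define T where "T k y \<longleftrightarrow> a [y, 2*k] * 4^k < 2 * (c [y, 2*k] + 1) + b [y, 2*k] * 4^k" for k y
  have quarter: "(1/2::real) ^ (2*k) = (1/4) ^ k" for k
    by (simp add: power_mult power2_eq_square)
  have T_iff: "T k y \<longleftrightarrow> nat_frac (a [y, 2*k]) (b [y, 2*k]) (c [y, 2*k]) < 2 * (1/4) ^ k" for k y
    using nat_frac_less_iff[of "4^k" "a [y, 2*k]" "b [y, 2*k]" "c [y, 2*k]" 2]
    unfolding T_def by (simp add: power_one_over)
  have small: "\<rho> y \<le> 3 * (1/4) ^ k" if "T k y" for k y
    using approx[of y "2*k"] that unfolding T_iff quarter by linarith
  have unbounded: "\<exists>y>p. T k y" for k p
  proof -
    have "\<forall>\<^sub>F y in sequentially. \<rho> y < (1/4) ^ k"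
      using order_tendstoD(2)[OF null] by simp
    then obtain N where N: "\<And>y. N \<le> y \<Longrightarrow> \<rho> y < (1/4) ^ k"
      unfolding eventually_sequentially by blast
    have "T k (N + p + 1)"
      using N[of "N + p + 1"] approx[of "N + p + 1" "2*k"] unfolding T_iff quarter by linarith
    then show ?thesis by (intro exI[of _ "N + p + 1"]) simp
  qed
  have "recursive_pred 2 (\<lambda>xs. T (xs!0) (xs!1))"
    unfolding T_def
    by (intro recursive_pred_less recursive_fn_add recursive_fn_mult recursive_fn_pow
        total_rec2_comp[OF abc(1)] total_rec2_comp[OF abc(2)] total_rec2_comp[OF abc(3)]
        recursive_fn_proj recursive_fn_const) simp_all
  from recursive_strict_mono_selection[OF this unbounded] that small show ?thesis by metis
qed

lemma computable_semi_povm_diag_small: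
  fixes M :: "bool list \<Rightarrow> complex^'n^'n"
  assumes "semi_povm M" "computable_mat_fn M"
  obtains \<sigma> where "strict_mono \<sigma>" "recursive_fn 1 (\<lambda>xs. \<sigma> (xs!0))"
    "\<And>k. Re (M (str_decode (\<sigma> k)) $ i $ i) \<le> 3 * (1/4) ^ k"
proof -
  obtain G where G: "total_rec_QC_mat G" "\<And>s k. norm (M s - G s k) < (1/2) ^ k"
    using assms(2) unfolding computable_mat_fn_def by blast
  obtain re im where re: "rec_rat_fn re"
    "\<And>s k. G s k $ i $ i = Complex (of_rat (re (str_code s) k)) (of_rat (im (str_code s) k))"
    using G(1) unfolding total_rec_QC_mat_def by blast
  obtain a b c where abc: "total_rec 2 a" "total_rec 2 b" "total_rec 2 c"
    and re_eq: "\<And>x y. of_rat (re x y) = nat_frac (a [x, y]) (b [x, y]) (c [x, y])"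
    using rec_rat_fn_nat_frac[OF re(1)] by blast
  define \<rho> where "\<rho> y = Re (M (str_decode y) $ i $ i)" for y
  have approx: "\<bar>\<rho> y - nat_frac (a [y, k]) (b [y, k]) (c [y, k])\<bar> < (1/2) ^ k" for y k
  proof -
    have "\<rho> y - nat_frac (a [y, k]) (b [y, k]) (c [y, k]) = Re ((M (str_decode y) - G (str_decode y) k) $ i $ i)"
      by (simp add: \<rho>_def re(2) re_eq)
    also have "\<bar>\<dots>\<bar> \<le> norm (M (str_decode y) - G (str_decode y) k)"
      by (rule abs_Re_entry_le_norm)
    finally show ?thesis using G(2) by (meson le_less_trans)
  qed
  obtain S where "(M has_sum S) UNIV"
    using assms(1) unfolding semi_povm_def by blast
  then have "\<rho> sums Re (S $ i $ i)"
    unfolding \<rho>_def by (rule has_sum_diag_sums)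
  then have "\<rho> \<longlonglongrightarrow> 0"
    by (intro summable_LIMSEQ_zero sums_summable)
  then obtain \<sigma> where "strict_mono \<sigma>" "recursive_fn 1 (\<lambda>xs. \<sigma> (xs!0))" "\<And>k. \<rho> (\<sigma> k) \<le> 3 * (1/4) ^ k"
    using computable_null_seq_recursive_subseq[OF abc approx] by blast
  then show ?thesis unfolding \<rho>_def by (rule that)
qed

section \<open>Lower-computable probability distributions\<close>

lemma tail_small_of_partial_sum_lower_bound:
  fixes \<rho> w :: "nat \<Rightarrow> real"
  assumes "\<rho> sums 1" "\<And>y. 0 \<le> \<rho> y" "\<And>y. w y \<le> \<rho> y"
    and "1 - \<epsilon> < (\<Sum>y<Suc z. w y)" "z < y"
  shows "\<rho> y < \<epsilon>"
proof -
  have "sum \<rho> (insert y {..<Suc z}) \<le> 1"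
    using sum_le_suminf[of \<rho> "insert y {..<Suc z}"] assms(1,2) by (simp add: sums_iff)
  then have "(\<Sum>y<Suc z. \<rho> y) + \<rho> y \<le> 1"
    using assms(5) by simp
  moreover have "(\<Sum>y<Suc z. w y) \<le> (\<Sum>y<Suc z. \<rho> y)"
    by (intro sum_mono assms(3))
  ultimately show ?thesis using assms(4) by linarith
qed

lemma lower_approx_partial_sums:
  fixes \<rho> :: "nat \<Rightarrow> real" and v :: "nat \<Rightarrow> nat \<Rightarrow> real"
  assumes "\<rho> sums 1" "\<And>y. (\<lambda>n. v n y) \<longlonglongrightarrow> \<rho> y" "0 < \<epsilon>"
  shows "\<forall>\<^sub>F z in sequentially. 1 - \<epsilon> < (\<Sum>y<Suc z. max (v z y) 0)"
proof -
  have "\<forall>\<^sub>F m in sequentially. 1 - \<epsilon> < (\<Sum>y<m. \<rho> y)"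
    using order_tendstoD(1)[OF assms(1)[unfolded sums_def]] assms(3) by simp
  then obtain m where m: "1 - \<epsilon> < (\<Sum>y<m. \<rho> y)"
    using eventually_happens'[OF sequentially_bot] by blast
  have close: "\<forall>\<^sub>F z in sequentially. 1 - \<epsilon> < (\<Sum>y<m. v z y)"
    using order_tendstoD(1)[OF tendsto_sum[OF assms(2)] m] .
  have mono: "(\<Sum>y<m. v z y) \<le> (\<Sum>y<Suc z. max (v z y) 0)" if "m \<le> z" for z
  proof -
    have "(\<Sum>y<m. v z y) \<le> (\<Sum>y<m. max (v z y) 0)"
      by (intro sum_mono) simp
    also have "\<dots> \<le> (\<Sum>y<Suc z. max (v z y) 0)"
      using that by (intro sum_mono2) auto
    finally show ?thesis .
  qed
  from close eventually_ge_at_top[of m] show ?thesis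
  proof eventually_elim
    case (elim z)
    then show ?case using mono[of z] by linarith
  qed
qed

lemma dyadic_lower_sums_detect_tail:
  fixes \<rho> :: "nat \<Rightarrow> real" and v :: "nat \<Rightarrow> nat \<Rightarrow> real" and P :: "nat \<Rightarrow> nat \<Rightarrow> nat \<Rightarrow> nat"
  assumes sums: "\<rho> sums 1" and nonneg: "\<And>y. 0 \<le> \<rho> y"
    and conv: "\<And>y. (\<lambda>n. v n y) \<longlonglongrightarrow> \<rho> y"
    and P_le: "\<And>z y K. real (P z y K) / 2 ^ K \<le> \<rho> y"
    and P_gt: "\<And>z y K. max (v z y) 0 - 1 / 2 ^ K < real (P z y K) / 2 ^ K"
  defines "T k z \<equiv> 1 - (1/4) ^ k < (\<Sum>y<Suc z. real (P z y (2*k + z + 2)) / 2 ^ (2*k + z + 2))"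
  shows "\<exists>z. T k z" and "T k z \<Longrightarrow> z < y \<Longrightarrow> \<rho> y < (1/4) ^ k"
proof -
  have "\<forall>\<^sub>F z in sequentially. 1 - (1/4) ^ k / 2 < (\<Sum>y<Suc z. max (v z y) 0)"
    by (rule lower_approx_partial_sums[OF sums conv]) simp
  then obtain z where z: "1 - (1/4) ^ k / 2 < (\<Sum>y<Suc z. max (v z y) 0)"
    using eventually_happens'[OF sequentially_bot] by blast
  (* this precision keeps the total rounding error of the z + 1 summands below 4^-k / 4 *)
  define K where "K = 2*k + z + 2"
  have "(\<Sum>y<Suc z. max (v z y) 0 - 1 / 2 ^ K) \<le> (\<Sum>y<Suc z. real (P z y K) / 2 ^ K)"
    using P_gt[of z _ K] by (intro sum_mono less_imp_le)
  then have "(\<Sum>y<Suc z. max (v z y) 0) - real (Suc z) / 2 ^ K \<le> (\<Sum>y<Suc z. real (P z y K) / 2 ^ K)"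
    by (simp only: sum_subtractf) simp
  moreover have "real (Suc z) / 2 ^ K \<le> (1/4) ^ k / 4"
  proof -
    have "real (Suc z) \<le> 2 ^ z"
      using Suc_leI[OF less_exp[of z]] by (metis of_nat_le_iff of_nat_numeral of_nat_power)
    then have "real (Suc z) / 2 ^ K \<le> 2 ^ z / 2 ^ K"
      by (simp add: divide_right_mono)
    also have "(2::real) ^ z / 2 ^ K = (1/4) ^ k / 4"
      by (simp add: K_def power_add power_mult power_one_over)
    finally show ?thesis .
  qed
  moreover have "0 < (1/4::real) ^ k" by simp
  ultimately have "T k z"
    using z unfolding T_def K_def by linarith
  then show "\<exists>z. T k z" ..
  show "\<rho> y < (1/4) ^ k" if "T k z" "z < y" for z y
    using tail_small_of_partial_sum_lower_bound[OF sums nonneg, of "\<lambda>y. real (P z y (2*k + z + 2)) / 2 ^ (2*k + z + 2)"]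
      P_le that unfolding T_def by blast
qed

lemma recursive_dyadic_lower_sum:
  assumes "total_rec 2 a" "total_rec 2 b" "total_rec 2 c"
  shows "recursive_fn 3 (\<lambda>xs. \<Sum>y<xs!0. (a [xs!1, y] - b [xs!1, y]) * 2 ^ (xs!2) div Suc (c [xs!1, y]))"
proof -
  define f where "f y ys = (a [ys!0, y] - b [ys!0, y]) * 2 ^ (ys!1) div Suc (c [ys!0, y])" for y ys
  have "recursive_fn (Suc 2) (\<lambda>zs. f (zs!0) (tl zs))"
    unfolding f_def
    by (intro recursive_fn_div recursive_fn_mult recursive_fn_diff recursive_fn_pow
        total_rec2_comp[OF assms(1)] total_rec2_comp[OF assms(2)] total_rec2_comp[OF assms(3)]
        recursive_fn_shift recursive_fn_proj recursive_fn_const) simp_all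
  from recursive_fn_bounded_sum[OF this] have "recursive_fn 3 (\<lambda>xs. \<Sum>y<xs!0. f y (tl xs))"
    by simp
  then show ?thesis
    unfolding f_def by (rule recursive_fn_cong) (simp add: nth_tl numeral_2_eq_2)
qed

lemma lower_computable_distribution_tail_bound:
  fixes \<rho> :: "nat \<Rightarrow> real"
  assumes abc: "total_rec 2 a" "total_rec 2 b" "total_rec 2 c"
    and sums: "\<rho> sums 1" and nonneg: "\<And>y. 0 \<le> \<rho> y"
    and below: "\<And>n y. nat_frac (a [n, y]) (b [n, y]) (c [n, y]) \<le> \<rho> y"
    and conv: "\<And>y. (\<lambda>n. nat_frac (a [n, y]) (b [n, y]) (c [n, y])) \<longlonglongrightarrow> \<rho> y"
  obtains Z where "recursive_fn 1 (\<lambda>xs. Z (xs!0))" "\<And>k y. Z k < y \<Longrightarrow> \<rho> y < (1/4) ^ k"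
proof -
  (* P z y K / 2^K: the positive part of the stage-z approximation of rho y, rounded down to
     a multiple of 2^-K *)
  define P where "P z y K = (a [z, y] - b [z, y]) * 2 ^ K div Suc (c [z, y])" for z y K
  define T where "T k z \<longleftrightarrow> 1 - (1/4) ^ k < (\<Sum>y<Suc z. real (P z y (2*k + z + 2)) / 2 ^ (2*k + z + 2))"
    for k z
  define v where "v n y = nat_frac (a [n, y]) (b [n, y]) (c [n, y])" for n y
  have P_gt: "max (v z y) 0 - 1 / 2 ^ K < real (P z y K) / 2 ^ K" for z y K
    using dyadic_floor_bounds(2)[where x="a [z, y] - b [z, y]" and d="c [z, y]" and K=K]
    unfolding P_def v_def of_nat_diff_div_eq_max_nat_frac .
  have P_le: "real (P z y K) / 2 ^ K \<le> \<rho> y" for z y K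
    using dyadic_floor_bounds(1)[where x="a [z, y] - b [z, y]" and d="c [z, y]" and K=K] below[of z y] nonneg[of y]
    unfolding P_def of_nat_diff_div_eq_max_nat_frac by linarith
  have T: "\<exists>z. T k z" "T k z \<Longrightarrow> z < y \<Longrightarrow> \<rho> y < (1/4) ^ k" for k z y
    unfolding T_def
    using dyadic_lower_sums_detect_tail[OF sums nonneg conv[folded v_def] P_le P_gt] by blast+
  define Z where "Z k = (LEAST z. T k z)" for k
  have T_iff: "T k z \<longleftrightarrow> 4^k * 2^(2*k + z + 2) < 4^k * (\<Sum>y<Suc z. P z y (2*k + z + 2)) + 2^(2*k + z + 2)"
    for k z
    unfolding T_def dyadic_threshold_iff[symmetric] by (simp only: of_nat_sum sum_divide_distrib)
  have "recursive_pred (Suc 1) (\<lambda>zs. T (tl zs ! 0) (zs!0))"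
    unfolding T_iff P_def
    by (intro recursive_pred_less recursive_fn_add recursive_fn_mult recursive_fn_pow
        recursive_fn_comp3[OF recursive_dyadic_lower_sum[OF abc]] recursive_fn_Suc
        recursive_fn_shift recursive_fn_proj recursive_fn_const) simp_all
  then have "recursive_fn 1 (\<lambda>xs. Z (xs!0))"
    unfolding Z_def using T(1) by (intro recursive_fn_Least) auto
  moreover have "\<rho> y < (1/4) ^ k" if "Z k < y" for k y
    using T(2)[OF LeastI_ex[OF T(1)]] that unfolding Z_def by blast
  ultimately show ?thesis using that by blast
qed

lemma lower_computable_povm_diag_small:
  fixes M :: "bool list \<Rightarrow> complex^'n^'n"
  assumes "lower_computable_semi_povm M" "povm M"
  obtains \<sigma> where "strict_mono \<sigma>" "recursive_fn 1 (\<lambda>xs. \<sigma> (xs!0))"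
    "\<And>k. Re (M (str_decode (\<sigma> k)) $ i $ i) \<le> (1/4) ^ k"
proof -
  obtain f where f: "total_rec_QC_mat' f" "\<And>s. (\<lambda>n. f n s) \<longlonglongrightarrow> M s" "\<And>n s. f n s \<preceq>\<^sub>L M s"
    using assms(1) unfolding lower_computable_semi_povm_def by blast
  obtain re im where re: "rec_rat_fn re"
    "\<And>n s. f n s $ i $ i = Complex (of_rat (re n (str_code s))) (of_rat (im n (str_code s)))"
    using f(1) unfolding total_rec_QC_mat'_def by blast
  obtain a b c where abc: "total_rec 2 a" "total_rec 2 b" "total_rec 2 c"
    and re_eq: "\<And>x y. of_rat (re x y) = nat_frac (a [x, y]) (b [x, y]) (c [x, y])"
    using rec_rat_fn_nat_frac[OF re(1)] by blast
  define \<rho> where "\<rho> y = Re (M (str_decode y) $ i $ i)" for y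
  have entry: "Re (f n (str_decode y) $ i $ i) = nat_frac (a [n, y]) (b [n, y]) (c [n, y])" for n y
    by (simp add: re(2) re_eq)
  have sums: "\<rho> sums 1"
    using has_sum_diag_sums[of M "mat 1" i] assms(2) unfolding povm_def \<rho>_def by (simp add: mat_def)
  have nonneg: "0 \<le> \<rho> y" for y
    using loewner_le_diag[of 0 "M (str_decode y)" i] assms(2) unfolding povm_def \<rho>_def by simp
  have below: "nat_frac (a [n, y]) (b [n, y]) (c [n, y]) \<le> \<rho> y" for n y
    using loewner_le_diag[OF f(3)] unfolding \<rho>_def entry[symmetric] .
  have conv: "(\<lambda>n. nat_frac (a [n, y]) (b [n, y]) (c [n, y])) \<longlonglongrightarrow> \<rho> y" for y
    unfolding \<rho>_def entry[symmetric] by (intro tendsto_Re tendsto_vec_nth f(2))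
  obtain Z where Z: "recursive_fn 1 (\<lambda>xs. Z (xs!0))" "\<And>k y. Z k < y \<Longrightarrow> \<rho> y < (1/4) ^ k"
    using lower_computable_distribution_tail_bound[OF abc sums nonneg below conv] by blast
  have Z_pred: "recursive_pred 2 (\<lambda>xs. Z (xs!0) < xs!1)"
    by (intro recursive_pred_less recursive_fn_comp1[OF Z(1)] recursive_fn_proj) simp_all
  have Z_unbounded: "\<exists>y>p. Z k < y" for k p
    by (intro exI[of _ "Suc (max p (Z k))"]) (simp add: less_Suc_eq_le)
  obtain \<sigma> where "strict_mono \<sigma>" "recursive_fn 1 (\<lambda>xs. \<sigma> (xs!0))" "\<And>k. Z k < \<sigma> k"
    using recursive_strict_mono_selection[OF Z_pred Z_unbounded] by blast
  with that Z(2) show ?thesis unfolding \<rho>_def by (meson less_imp_le)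
qed

theorem mainTheorem12:
  fixes M :: "bool list \<Rightarrow> complex^'n^'n"
  assumes "universal_semi_povm M"
  shows "\<not> computable_mat_fn M \<and> \<not> povm M"
proof
  have lower_computable: "lower_computable_semi_povm M"
    using assms unfolding universal_semi_povm_def by blast
  then have semi: "semi_povm M"
    unfolding lower_computable_semi_povm_def by blast
  let ?i = "undefined :: 'n"
  show "\<not> computable_mat_fn M"
  proof
    assume "computable_mat_fn M"
    then obtain \<sigma> where "strict_mono \<sigma>" "recursive_fn 1 (\<lambda>xs. \<sigma> (xs!0))"
      "\<And>k. Re (M (str_decode (\<sigma> k)) $ ?i $ ?i) \<le> 3 * (1/4) ^ k"
      using computable_semi_povm_diag_small[OF semi] by blast
    then show False by (rule universal_semi_povm_diag_not_small[OF assms])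
  qed
  show "\<not> povm M"
  proof
    assume "povm M"
    then obtain \<sigma> where "strict_mono \<sigma>" "recursive_fn 1 (\<lambda>xs. \<sigma> (xs!0))"
      "\<And>k. Re (M (str_decode (\<sigma> k)) $ ?i $ ?i) \<le> 1 * (1/4) ^ k"
      using lower_computable_povm_diag_small[OF lower_computable] by auto
    then show False by (rule universal_semi_povm_diag_not_small[OF assms])
  qed
qed

end
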